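(* Let $P\in\Delta$ be such that, under $P$, $Y$ and $Z$ are conditionally independent given $X$, and $Y$ and $Z$ are (unconditionally) independent. Then $\widetilde{SI}(X:Y;Z)=0$.
   Context: $X,Y,Z$ are random variables with finite state spaces $\mathcal X,\mathcal Y,\mathcal Z$. $\Delta$ denotes the set of all probability distributions on $\mathcal X\times\mathcal Y\times\mathcal Z$; $P\in\Delta$ is the joint distribution, and a subscript $Q$ means computed w.r.t. $Q\in\Delta$. $\Delta_P=\{Q\in\Delta: Q(X=x,Y=y)=P(X=x,Y=y)\text{ and }Q(X=x,Z=z)=P(X=x,Z=z)\ \forall x,y,z\}$. $CoI_Q(X;Y;Z)=MI_Q(X:Y)-MI_Q(X:Y|Z)$ and $\widetilde{SI}(X:Y;Z)=\max_{Q\in\Delta_P}CoI_Q(X;Y;Z)$. *)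

theory Defs
  imports Complex_Main
begin

definition is_dist :: "('x::finite \<Rightarrow> 'y::finite \<Rightarrow> 'z::finite \<Rightarrow> real) \<Rightarrow> bool" where
  "is_dist Q \<longleftrightarrow> (\<forall>x y z. 0 \<le> Q x y z) \<and> (\<Sum>x\<in>UNIV. \<Sum>y\<in>UNIV. \<Sum>z\<in>UNIV. Q x y z) = 1"

definition mXY :: "('x::finite \<Rightarrow> 'y::finite \<Rightarrow> 'z::finite \<Rightarrow> real) \<Rightarrow> 'x \<Rightarrow> 'y \<Rightarrow> real" where
  "mXY Q x y = (\<Sum>z\<in>UNIV. Q x y z)"
definition mXZ :: "('x::finite \<Rightarrow> 'y::finite \<Rightarrow> 'z::finite \<Rightarrow> real) \<Rightarrow> 'x \<Rightarrow> 'z \<Rightarrow> real" where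
  "mXZ Q x z = (\<Sum>y\<in>UNIV. Q x y z)"
definition mYZ :: "('x::finite \<Rightarrow> 'y::finite \<Rightarrow> 'z::finite \<Rightarrow> real) \<Rightarrow> 'y \<Rightarrow> 'z \<Rightarrow> real" where
  "mYZ Q y z = (\<Sum>x\<in>UNIV. Q x y z)"
definition mX :: "('x::finite \<Rightarrow> 'y::finite \<Rightarrow> 'z::finite \<Rightarrow> real) \<Rightarrow> 'x \<Rightarrow> real" where
  "mX Q x = (\<Sum>y\<in>UNIV. \<Sum>z\<in>UNIV. Q x y z)"
definition mY :: "('x::finite \<Rightarrow> 'y::finite \<Rightarrow> 'z::finite \<Rightarrow> real) \<Rightarrow> 'y \<Rightarrow> real" where
  "mY Q y = (\<Sum>x\<in>UNIV. \<Sum>z\<in>UNIV. Q x y z)"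
definition mZ :: "('x::finite \<Rightarrow> 'y::finite \<Rightarrow> 'z::finite \<Rightarrow> real) \<Rightarrow> 'z \<Rightarrow> real" where
  "mZ Q z = (\<Sum>x\<in>UNIV. \<Sum>y\<in>UNIV. Q x y z)"

definition MI_XY :: "('x::finite \<Rightarrow> 'y::finite \<Rightarrow> 'z::finite \<Rightarrow> real) \<Rightarrow> real" where
  "MI_XY Q = (\<Sum>x\<in>UNIV. \<Sum>y\<in>UNIV.
     if mXY Q x y = 0 then 0
     else mXY Q x y * log 2 (mXY Q x y / (mX Q x * mY Q y)))"

definition CMI_XY_Z :: "('x::finite \<Rightarrow> 'y::finite \<Rightarrow> 'z::finite \<Rightarrow> real) \<Rightarrow> real" where
  "CMI_XY_Z Q = (\<Sum>x\<in>UNIV. \<Sum>y\<in>UNIV. \<Sum>z\<in>UNIV.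
     if Q x y z = 0 then 0
     else Q x y z * log 2 ((Q x y z * mZ Q z) / (mXZ Q x z * mYZ Q y z)))"

definition CoI :: "('x::finite \<Rightarrow> 'y::finite \<Rightarrow> 'z::finite \<Rightarrow> real) \<Rightarrow> real" where
  "CoI Q = MI_XY Q - CMI_XY_Z Q"

definition Delta_P :: "('x::finite \<Rightarrow> 'y::finite \<Rightarrow> 'z::finite \<Rightarrow> real) \<Rightarrow> ('x \<Rightarrow> 'y \<Rightarrow> 'z \<Rightarrow> real) set" where
  "Delta_P P = {Q. is_dist Q \<and> (\<forall>x y. mXY Q x y = mXY P x y) \<and> (\<forall>x z. mXZ Q x z = mXZ P x z)}"

text \<open>SI~(X:Y;Z) = max over Delta_P of CoI (the maximum is attained by compactness,
  so it coincides with the supremum).\<close>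
definition SI_tilde :: "('x::finite \<Rightarrow> 'y::finite \<Rightarrow> 'z::finite \<Rightarrow> real) \<Rightarrow> real" where
  "SI_tilde P = Sup (CoI ` Delta_P P)"

definition cond_indep_YZ_X :: "('x::finite \<Rightarrow> 'y::finite \<Rightarrow> 'z::finite \<Rightarrow> real) \<Rightarrow> bool" where
  "cond_indep_YZ_X Q \<longleftrightarrow> (\<forall>x y z. Q x y z * mX Q x = mXY Q x y * mXZ Q x z)"
definition indep_YZ :: "('x::finite \<Rightarrow> 'y::finite \<Rightarrow> 'z::finite \<Rightarrow> real) \<Rightarrow> bool" where
  "indep_YZ Q \<longleftrightarrow> (\<forall>y z. mYZ Q y z = mY Q y * mZ Q z)"

end

theory Submission
  imports Defs
begin

text \<open>For \<open>Q \<in> Delta_P P\<close> all one- and two-variable marginals except the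
  \<open>(Y,Z)\<close>-marginal agree with those of \<open>P\<close>. Using \<open>P(x,y,z) p(x) = p(x,y) p(x,z)\<close> and
  \<open>p(y,z) = p(y) p(z)\<close>, the co-information becomes \<open>CoI Q = \<Sum> Q log (R / Q)\<close> with
  \<open>R(x,y,z) = P(x,y,z) q(y,z) / p(y,z)\<close>. Since \<open>R\<close> has total mass at most 1, Gibbs' inequality
  gives \<open>CoI Q \<le> 0\<close>, and for \<open>Q = P\<close> we have \<open>R = P\<close>, so the maximum \<open>0\<close> is attained.\<close>

lemma sum_UNIV_curried3:
  fixes f :: "'a::finite \<Rightarrow> 'b::finite \<Rightarrow> 'c::finite \<Rightarrow> 'd::comm_monoid_add"
  shows "(\<Sum>x\<in>UNIV. \<Sum>y\<in>UNIV. \<Sum>z\<in>UNIV. f x y z) = (\<Sum>(x, y, z)\<in>UNIV. f x y z)"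
  by (simp add: sum.cartesian_product flip: UNIV_Times_UNIV)

lemma log2_le_minus_one_div_ln2:
  assumes "0 < (t::real)"
  shows "log 2 t \<le> (t - 1) / ln 2"
  using ln_le_minus_one[OF assms] by (simp add: log_def divide_right_mono)

lemma gibbs_inequality_log2:
  fixes p q :: "'a \<Rightarrow> real"
  assumes "finite A"
    and p_nonneg: "\<And>a. a \<in> A \<Longrightarrow> 0 \<le> p a" and p_sum: "sum p A = 1"
    and q_nonneg: "\<And>a. a \<in> A \<Longrightarrow> 0 \<le> q a" and q_sum: "sum q A \<le> 1"
    and q_pos: "\<And>a. a \<in> A \<Longrightarrow> 0 < p a \<Longrightarrow> 0 < q a"
  shows "(\<Sum>a\<in>A. if p a = 0 then 0 else p a * log 2 (q a / p a)) \<le> 0"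
proof -
  have term_le: "(if p a = 0 then 0 else p a * log 2 (q a / p a)) \<le> (q a - p a) / ln 2"
    if a: "a \<in> A" for a
  proof (cases "p a = 0")
    case True
    then show ?thesis using q_nonneg[OF a] by simp
  next
    case False
    then have p: "0 < p a" using p_nonneg[OF a] by simp
    have "p a * log 2 (q a / p a) \<le> p a * ((q a / p a - 1) / ln 2)"
      using log2_le_minus_one_div_ln2[of "q a / p a"] p q_pos[OF a p]
      by (intro mult_left_mono) auto
    also have "\<dots> = (q a - p a) / ln 2"
      using p by (simp add: field_simps)
    finally show ?thesis using False by simp
  qed
  have "(\<Sum>a\<in>A. if p a = 0 then 0 else p a * log 2 (q a / p a)) \<le> (\<Sum>a\<in>A. (q a - p a) / ln 2)"
    by (rule sum_mono) (rule term_le)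
  also have "\<dots> = (sum q A - 1) / ln 2"
    by (simp add: p_sum sum_subtractf flip: sum_divide_distrib)
  also have "\<dots> \<le> 0"
    using q_sum by (simp add: divide_nonpos_pos)
  finally show ?thesis .
qed

lemma is_dist_nonneg: "is_dist Q \<Longrightarrow> 0 \<le> Q x y z"
  by (simp add: is_dist_def)

lemma mX_eq_sum_mXY: "mX Q x = (\<Sum>y\<in>UNIV. mXY Q x y)"
  by (simp add: mX_def mXY_def)

lemma mY_eq_sum_mXY: "mY Q y = (\<Sum>x\<in>UNIV. mXY Q x y)"
  by (simp add: mY_def mXY_def)

lemma mZ_eq_sum_mXZ: "mZ Q z = (\<Sum>x\<in>UNIV. mXZ Q x z)"
  by (simp add: mZ_def mXZ_def)

lemma marginals_pos_of_entry_pos: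
  fixes Q :: "'x::finite \<Rightarrow> 'y::finite \<Rightarrow> 'z::finite \<Rightarrow> real"
  assumes nonneg: "\<And>x y z. 0 \<le> Q x y z" and pos: "0 < Q x y z"
  shows "0 < mXY Q x y" "0 < mXZ Q x z" "0 < mYZ Q y z"
    and "0 < mX Q x" "0 < mY Q y" "0 < mZ Q z"
proof -
  have le_sum: "f a \<le> (\<Sum>i\<in>UNIV. f i)" if "\<And>i. 0 \<le> f i" for f :: "'b::finite \<Rightarrow> real" and a
    using that by (intro member_le_sum) auto
  have XY_nonneg: "\<And>x y. 0 \<le> mXY Q x y" and XZ_nonneg: "\<And>x z. 0 \<le> mXZ Q x z"
    by (simp_all add: mXY_def mXZ_def sum_nonneg nonneg)
  have "Q x y z \<le> mXY Q x y" "Q x y z \<le> mXZ Q x z" "Q x y z \<le> mYZ Q y z"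
    unfolding mXY_def mXZ_def mYZ_def by (rule le_sum, rule nonneg)+
  moreover have "mXY Q x y \<le> mX Q x" "mXY Q x y \<le> mY Q y" "mXZ Q x z \<le> mZ Q z"
    unfolding mX_eq_sum_mXY mY_eq_sum_mXY mZ_eq_sum_mXZ
    by (rule le_sum, rule XY_nonneg XZ_nonneg)+
  ultimately show "0 < mXY Q x y" "0 < mXZ Q x z" "0 < mYZ Q y z"
    and "0 < mX Q x" "0 < mY Q y" "0 < mZ Q z"
    using pos by linarith+
qed

lemma Delta_P_same_marginals:
  assumes "Q \<in> Delta_P P"
  shows "mXY Q x y = mXY P x y" "mXZ Q x z = mXZ P x z"
    and "mX Q x = mX P x" "mY Q y = mY P y" "mZ Q z = mZ P z"
  using assms by (simp_all add: Delta_P_def mX_eq_sum_mXY mY_eq_sum_mXY mZ_eq_sum_mXZ)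

lemma MI_XY_eq_entry_sum:
  fixes Q :: "'x::finite \<Rightarrow> 'y::finite \<Rightarrow> 'z::finite \<Rightarrow> real"
  assumes nonneg: "\<And>x y z. 0 \<le> Q x y z"
  shows "MI_XY Q = (\<Sum>x\<in>UNIV. \<Sum>y\<in>UNIV. \<Sum>z\<in>UNIV.
    if Q x y z = 0 then 0 else Q x y z * log 2 (mXY Q x y / (mX Q x * mY Q y)))"
  unfolding MI_XY_def
proof (intro sum.cong refl)
  fix x y
  let ?c = "log 2 (mXY Q x y / (mX Q x * mY Q y))"
  have "(\<Sum>z\<in>UNIV. if Q x y z = 0 then 0 else Q x y z * ?c) = mXY Q x y * ?c"
    unfolding mXY_def sum_distrib_right by (intro sum.cong) auto
  moreover have "mXY Q x y = 0 \<Longrightarrow> Q x y z = 0" for z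
    using sum_nonneg_eq_0_iff[of UNIV "Q x y"] nonneg by (auto simp: mXY_def)
  ultimately show "(if mXY Q x y = 0 then 0 else mXY Q x y * ?c) =
      (\<Sum>z\<in>UNIV. if Q x y z = 0 then 0 else Q x y z * ?c)"
    by auto
qed

text \<open>The reweighting \<open>R(x,y,z) = P(x,y,z) q(y,z) / p(y,z)\<close>; where \<open>p(y,z) = 0\<close> it is \<open>0\<close>
  by the convention \<open>r / 0 = 0\<close>, so its total mass is at most 1 rather than 1.\<close>
definition YZ_reweighting ::
    "('x::finite \<Rightarrow> 'y::finite \<Rightarrow> 'z::finite \<Rightarrow> real) \<Rightarrow> ('x \<Rightarrow> 'y \<Rightarrow> 'z \<Rightarrow> real) \<Rightarrow> 'x \<Rightarrow> 'y \<Rightarrow> 'z \<Rightarrow> real"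
  where "YZ_reweighting P Q x y z = P x y z * mYZ Q y z / mYZ P y z"

lemma CoI_eq_log_ratio_sum:
  fixes P Q :: "'x::finite \<Rightarrow> 'y::finite \<Rightarrow> 'z::finite \<Rightarrow> real"
  assumes ci: "cond_indep_YZ_X P" and ind: "indep_YZ P" and Q: "Q \<in> Delta_P P"
  shows "CoI Q = (\<Sum>x\<in>UNIV. \<Sum>y\<in>UNIV. \<Sum>z\<in>UNIV.
    if Q x y z = 0 then 0 else Q x y z * log 2 (YZ_reweighting P Q x y z / Q x y z))"
proof -
  have nonneg: "\<And>x y z. 0 \<le> Q x y z"
    using Q by (simp add: Delta_P_def is_dist_nonneg)
  have log_diff: "log 2 (mXY Q x y / (mX Q x * mY Q y))
      - log 2 (Q x y z * mZ Q z / (mXZ Q x z * mYZ Q y z))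
      = log 2 (YZ_reweighting P Q x y z / Q x y z)"
    if "Q x y z \<noteq> 0" for x y z
  proof -
    have q: "0 < Q x y z"
      using that nonneg[of x y z] by simp
    note pos = marginals_pos_of_entry_pos[of Q, OF nonneg q]
    note same = Delta_P_same_marginals[OF Q]
    have "(mXY Q x y / (mX Q x * mY Q y)) / (Q x y z * mZ Q z / (mXZ Q x z * mYZ Q y z))
        = (mXY P x y * mXZ P x z) * mYZ Q y z / (mX P x * (Q x y z * (mY P y * mZ P z)))"
      using pos q by (simp add: same field_simps)
    also have "\<dots> = (P x y z * mX P x) * mYZ Q y z / (mX P x * (Q x y z * mYZ P y z))"
      using ci ind by (simp add: cond_indep_YZ_X_def indep_YZ_def)
    also have "\<dots> = YZ_reweighting P Q x y z / Q x y z"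
      using pos by (simp add: same YZ_reweighting_def)
    finally show ?thesis
      using pos q by (simp flip: log_divide_pos)
  qed
  show ?thesis
    unfolding CoI_def MI_XY_eq_entry_sum[OF nonneg] CMI_XY_Z_def sum_subtractf[symmetric]
    using nonneg log_diff by (intro sum.cong refl) (auto simp flip: right_diff_distrib)
qed

lemma YZ_reweighting_nonneg:
  assumes "is_dist P" and "is_dist Q"
  shows "0 \<le> YZ_reweighting P Q x y z"
  using assms by (simp add: YZ_reweighting_def mYZ_def is_dist_nonneg sum_nonneg)

lemma sum_YZ_reweighting_le_1:
  fixes P Q :: "'x::finite \<Rightarrow> 'y::finite \<Rightarrow> 'z::finite \<Rightarrow> real"
  assumes "is_dist Q"
  shows "(\<Sum>x\<in>UNIV. \<Sum>y\<in>UNIV. \<Sum>z\<in>UNIV. YZ_reweighting P Q x y z) \<le> 1"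
proof -
  have YZ_nonneg: "0 \<le> mYZ Q y z" for y z
    using assms by (simp add: mYZ_def is_dist_nonneg sum_nonneg)
  have "(\<Sum>x\<in>UNIV. YZ_reweighting P Q x y z) = mYZ P y z * mYZ Q y z / mYZ P y z" for y z
    by (simp add: YZ_reweighting_def mYZ_def sum_distrib_right sum_divide_distrib)
  then have "(\<Sum>x\<in>UNIV. YZ_reweighting P Q x y z) \<le> mYZ Q y z" for y z
    using YZ_nonneg[of y z] by (cases "mYZ P y z = 0") simp_all
  then have "(\<Sum>y\<in>UNIV. \<Sum>z\<in>UNIV. \<Sum>x\<in>UNIV. YZ_reweighting P Q x y z)
      \<le> (\<Sum>y\<in>UNIV. \<Sum>z\<in>UNIV. mYZ Q y z)"
    by (intro sum_mono)
  also have "\<dots> = 1"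
    using assms by (simp add: is_dist_def mYZ_def sum.swap[of _ "UNIV :: 'x set"])
  finally show ?thesis
    by (simp add: sum.swap[of _ "UNIV :: 'x set"])
qed

lemma YZ_reweighting_pos:
  assumes ci: "cond_indep_YZ_X P" and ind: "indep_YZ P" and Q: "Q \<in> Delta_P P"
    and q: "0 < Q x y z"
  shows "0 < YZ_reweighting P Q x y z"
proof -
  have nonneg: "\<And>x y z. 0 \<le> Q x y z"
    using Q by (simp add: Delta_P_def is_dist_nonneg)
  note pos = marginals_pos_of_entry_pos[of Q, OF nonneg q]
  note same = Delta_P_same_marginals[OF Q]
  have "0 < P x y z * mX P x"
    using ci pos by (simp add: cond_indep_YZ_X_def same flip: same)
  then have "0 < P x y z"
    using pos by (simp add: same zero_less_mult_iff)
  moreover have "0 < mYZ P y z"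
    using ind pos by (simp add: indep_YZ_def same)
  ultimately show ?thesis
    using pos by (simp add: YZ_reweighting_def)
qed

lemma CoI_nonpos_on_Delta_P:
  fixes P Q :: "'x::finite \<Rightarrow> 'y::finite \<Rightarrow> 'z::finite \<Rightarrow> real"
  assumes "is_dist P" and ci: "cond_indep_YZ_X P" and ind: "indep_YZ P" and Q: "Q \<in> Delta_P P"
  shows "CoI Q \<le> 0"
proof -
  let ?q = "\<lambda>(x, y, z). Q x y z" and ?r = "\<lambda>(x, y, z). YZ_reweighting P Q x y z"
  have dist_Q: "is_dist Q"
    using Q by (simp add: Delta_P_def)
  have "CoI Q = (\<Sum>a\<in>UNIV. if ?q a = 0 then 0 else ?q a * log 2 (?r a / ?q a))"
    unfolding CoI_eq_log_ratio_sum[OF ci ind Q] sum_UNIV_curried3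
    by (intro sum.cong) (auto split: prod.split)
  also have "\<dots> \<le> 0"
  proof (rule gibbs_inequality_log2)
    show "sum ?q UNIV = 1" "sum ?r UNIV \<le> 1"
      using dist_Q sum_YZ_reweighting_le_1[OF dist_Q, of P]
      by (simp_all add: is_dist_def flip: sum_UNIV_curried3)
    show "0 \<le> ?q a" for a
      using dist_Q by (simp add: is_dist_nonneg split: prod.split)
    show "0 \<le> ?r a" for a
      using dist_Q \<open>is_dist P\<close> by (simp add: YZ_reweighting_nonneg split: prod.split)
    show "0 < ?q a \<Longrightarrow> 0 < ?r a" for a
      using YZ_reweighting_pos[OF ci ind Q] by (auto split: prod.split)
  qed simp
  finally show ?thesis .
qed

lemma self_mem_Delta_P: "is_dist P \<Longrightarrow> P \<in> Delta_P P"
  by (simp add: Delta_P_def)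

lemma CoI_self_eq_0:
  fixes P :: "'x::finite \<Rightarrow> 'y::finite \<Rightarrow> 'z::finite \<Rightarrow> real"
  assumes "is_dist P" and ci: "cond_indep_YZ_X P" and ind: "indep_YZ P"
  shows "CoI P = 0"
proof -
  have "YZ_reweighting P P x y z = P x y z" if "P x y z \<noteq> 0" for x y z
  proof -
    have "0 < P x y z"
      using that is_dist_nonneg[OF \<open>is_dist P\<close>, of x y z] by simp
    then have "0 < mYZ P y z"
      using marginals_pos_of_entry_pos[of P] is_dist_nonneg[OF \<open>is_dist P\<close>] by blast
    then show ?thesis
      by (simp add: YZ_reweighting_def)
  qed
  then show ?thesis
    unfolding CoI_eq_log_ratio_sum[OF ci ind self_mem_Delta_P[OF \<open>is_dist P\<close>]]
    by (intro sum.neutral ballI) simp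
qed

theorem mainTheorem7:
  fixes P :: "'x::finite \<Rightarrow> 'y::finite \<Rightarrow> 'z::finite \<Rightarrow> real"
  assumes "is_dist P"
    and "cond_indep_YZ_X P"
    and "indep_YZ P"
  shows "SI_tilde P = 0"
  unfolding SI_tilde_def
proof (rule cSup_eq_maximum)
  show "0 \<in> CoI ` Delta_P P"
    using CoI_self_eq_0[OF assms] self_mem_Delta_P[OF assms(1)] by (metis image_eqI)
  show "c \<le> 0" if "c \<in> CoI ` Delta_P P" for c
    using that CoI_nonpos_on_Delta_P[OF assms] by blast
qed

end
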